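(* There exist constants $M>0$ and $k_0>0$ such that for all $k$ on the imaginary axis $k\in i\mathbb{R}$ with $|k|>k_0$, $$\Big|\frac{y(1;k)}{y'(1;k)}\Big|<M\qquad\text{and}\qquad \Big|\frac{j_0(k\tilde n_0)}{\partial_r j_0(k\tilde n_0 r)|_{r=1}}\Big|<M.$$
   Context: Let $\epsilon_0,\gamma_0>0$ be constants and $\epsilon_1,\gamma_1:[0,1]\to(0,\infty)$ twice differentiable; $k\in\mathbb{C}$. Put $\tilde n_0=(\epsilon_0+i\gamma_0/k)^{1/2}$ and $j_0(z)=\sin z/z$. Let $y(r;k)$ be the solution of $y''+k^2(\epsilon_1(r)+i\gamma_1(r)/k)y=0$ on $[0,1]$, $y(0)=0$, $y'(0)=1$, where prime denotes $d/dr$. *)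

theory Defs
  imports "HOL-Analysis.Analysis"
begin

definition j0 :: "complex \<Rightarrow> complex" where
  "j0 z = sin z / z"

definition ntilde0 :: "real \<Rightarrow> real \<Rightarrow> complex \<Rightarrow> complex" where
  "ntilde0 eps0 gam0 k = csqrt (complex_of_real eps0 + \<i> * complex_of_real gam0 / k)"

end

theory Submission imports Defs begin

(*
  (1) The ODE y'' = -k^2 (eps1 + i gam1/k) y turns into y'' = q y with the REAL
      coefficient q = t^2 eps1 + t gam1, which is nonnegative once |t| dominates
      max gam1/eps1.  For y'' = q y with q >= 0, y(0) = 0, y'(0) = 1, an energy
      argument shows that Re (conj y * y') and then |y'| are nondecreasing, so
      |y(1)| <= max |y'| = |y'(1)| and y'(1) <> 0.
  (2) k * ntilde0 = i s with s = t sqrt(eps0 + gam0/t) real and |s| >= 2 for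
      large |t|.  For c = i s one has j0(c) / (d/dr j0(c r))|_{r=1}
      = sin c / (c cos c - sin c) = sinh s / (s cosh s - sinh s), and
      |sinh s| < cosh s gives a bound by 1.
  The file first proves the ODE comparison (1), then the Bessel estimate (2),
  then specialises both to k = i t; the theorem follows with M = 2.
*)

section \<open>An energy estimate for y'' = q y with q \<ge> 0\<close>

lemma Re_mono_of_nonneg_deriv:
  fixes F F' :: "real \<Rightarrow> complex"
  assumes deriv: "\<forall>x\<in>{0..1}. (F has_vector_derivative F' x) (at x within {0..1})"
    and nonneg: "\<forall>x\<in>{0..1}. Re (F' x) \<ge> 0"
    and ab: "0 \<le> a" "a \<le> b" "b \<le> 1"
  shows "Re (F a) \<le> Re (F b)"
proof -
  have "(F' has_integral (F b - F a)) {a..b}"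
  proof (rule fundamental_theorem_of_calculus[OF ab(2)])
    fix x assume "x \<in> {a..b}"
    with deriv ab have "(F has_vector_derivative F' x) (at x within {0..1})" by auto
    thus "(F has_vector_derivative F' x) (at x within {a..b})"
      by (rule has_vector_derivative_within_subset) (use ab in auto)
  qed
  from has_integral_linear[OF this bounded_linear_Re]
  have "((\<lambda>x. Re (F' x)) has_integral Re (F b - F a)) {a..b}" by (simp add: o_def)
  hence "0 \<le> Re (F b - F a)" by (rule has_integral_nonneg) (use nonneg ab in auto)
  thus ?thesis by simp
qed

text \<open>The quantity Re (conj u * u') has derivative q |u|^2 + |u'|^2 \<ge> 0 and vanishes
  at 0, hence stays nonnegative.\<close>
lemma energy_nonneg:
  fixes u v :: "real \<Rightarrow> complex" and q :: "real \<Rightarrow> real"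
  assumes q: "\<forall>x\<in>{0..1}. q x \<ge> 0"
    and du: "\<forall>x\<in>{0..1}. (u has_vector_derivative v x) (at x within {0..1})"
    and dv: "\<forall>x\<in>{0..1}. (v has_vector_derivative (of_real (q x) * u x)) (at x within {0..1})"
    and u0: "u 0 = 0"
    and x: "x \<in> {0..1}"
  shows "Re (cnj (u x) * v x) \<ge> 0"
proof -
  have deriv: "\<forall>x\<in>{0..1}. ((\<lambda>x. cnj (u x) * v x) has_vector_derivative
      (cnj (u x) * (of_real (q x) * u x) + cnj (v x) * v x)) (at x within {0..1})"
    using du dv by (auto intro!: derivative_eq_intros)
  have nonneg: "\<forall>x\<in>{0..1}. Re (cnj (u x) * (of_real (q x) * u x) + cnj (v x) * v x) \<ge> 0"
  proof
    fix x :: real assume "x \<in> {0..1}"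
    have "cnj (u x) * (of_real (q x) * u x) + cnj (v x) * v x
       = of_real (q x * (cmod (u x))\<^sup>2 + (cmod (v x))\<^sup>2)"
      using complex_norm_square[of "u x"] complex_norm_square[of "v x"]
      by (simp add: algebra_simps)
    with q \<open>x \<in> {0..1}\<close> show "Re (cnj (u x) * (of_real (q x) * u x) + cnj (v x) * v x) \<ge> 0"
      by simp
  qed
  have "Re (cnj (u 0) * v 0) \<le> Re (cnj (u x) * v x)"
    using Re_mono_of_nonneg_deriv[OF deriv nonneg] x by auto
  with u0 show ?thesis by simp
qed

text \<open>Consequently |u'|^2, whose derivative is 2 q Re (conj u * u'), is nondecreasing:
  |u'| attains its maximum over [0,1] at the right end point.\<close>
lemma deriv_norm_max_at_end:
  fixes u v :: "real \<Rightarrow> complex" and q :: "real \<Rightarrow> real"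
  assumes q: "\<forall>x\<in>{0..1}. q x \<ge> 0"
    and du: "\<forall>x\<in>{0..1}. (u has_vector_derivative v x) (at x within {0..1})"
    and dv: "\<forall>x\<in>{0..1}. (v has_vector_derivative (of_real (q x) * u x)) (at x within {0..1})"
    and u0: "u 0 = 0"
    and x: "x \<in> {0..1}"
  shows "cmod (v x) \<le> cmod (v 1)"
proof -
  have deriv: "\<forall>x\<in>{0..1}. ((\<lambda>x. cnj (v x) * v x) has_vector_derivative
      (cnj (v x) * (of_real (q x) * u x) + cnj (of_real (q x) * u x) * v x)) (at x within {0..1})"
    using dv by (auto intro!: derivative_eq_intros)
  have nonneg: "\<forall>x\<in>{0..1}.
      Re (cnj (v x) * (of_real (q x) * u x) + cnj (of_real (q x) * u x) * v x) \<ge> 0"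
  proof
    fix x :: real assume x: "x \<in> {0..1}"
    have "Re (cnj (v x) * (of_real (q x) * u x) + cnj (of_real (q x) * u x) * v x)
        = 2 * q x * Re (cnj (u x) * v x)"
      by (simp add: algebra_simps)
    with q x energy_nonneg[OF q du dv u0 x]
    show "Re (cnj (v x) * (of_real (q x) * u x) + cnj (of_real (q x) * u x) * v x) \<ge> 0"
      by simp
  qed
  have "Re (cnj (v x) * v x) \<le> Re (cnj (v 1) * v 1)"
    using Re_mono_of_nonneg_deriv[OF deriv nonneg] x by auto
  hence "(cmod (v x))\<^sup>2 \<le> (cmod (v 1))\<^sup>2"
    by (metis Re_complex_of_real complex_norm_square mult.commute)
  thus ?thesis by (simp add: power2_le_iff_abs_le)
qed

text \<open>Comparison of Dirichlet and Neumann data at r = 1 for y'' = q y, q \<ge> 0,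
  y(0) = 0, y'(0) = 1: the Neumann value does not vanish and dominates the
  Dirichlet value, since |y(1)| \<le> \<integral>|y'| \<le> |y'(1)|.\<close>
lemma dirichlet_le_neumann:
  fixes u v :: "real \<Rightarrow> complex" and q :: "real \<Rightarrow> real"
  assumes q: "\<forall>x\<in>{0..1}. q x \<ge> 0"
    and du: "\<forall>x\<in>{0..1}. (u has_vector_derivative v x) (at x within {0..1})"
    and dv: "\<forall>x\<in>{0..1}. (v has_vector_derivative (of_real (q x) * u x)) (at x within {0..1})"
    and u0: "u 0 = 0" and v0: "v 0 = 1"
  shows "v 1 \<noteq> 0" and "cmod (u 1) \<le> cmod (v 1)"
proof -
  have vmax: "\<And>x. x \<in> {0..1} \<Longrightarrow> cmod (v x) \<le> cmod (v 1)"
    using deriv_norm_max_at_end[OF q du dv u0] by blast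
  from vmax[of 0] v0 show "v 1 \<noteq> 0" by auto
  have "(v has_integral (u 1 - u 0)) {0..1}"
    using du by (intro fundamental_theorem_of_calculus) auto
  with vmax have "cmod (u 1 - u 0) \<le> cmod (v 1)"
    using has_integral_bound[of "cmod (v 1)" v _ 0 1] by auto
  with u0 show "cmod (u 1) \<le> cmod (v 1)" by simp
qed

section \<open>The spherical Bessel function j0 on the imaginary axis\<close>

lemma j0_radial_derivative:
  fixes c :: complex assumes c: "c \<noteq> 0"
  shows "((\<lambda>r::real. j0 (c * of_real r)) has_vector_derivative ((c * cos c - sin c) / c)) (at 1)"
proof -
  have inner: "((\<lambda>r::real. c * of_real r) has_vector_derivative c) (at 1)"
    by (auto intro!: derivative_eq_intros)
  have outer: "(j0 has_field_derivative ((cos c * c - sin c) / c\<^sup>2)) (at ((\<lambda>r::real. c * of_real r) 1))"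
    unfolding j0_def using c
    by (auto intro!: derivative_eq_intros simp: field_simps power2_eq_square)
  have "c * ((cos c * c - sin c) / c\<^sup>2) = (c * cos c - sin c) / c"
    using c by (simp add: field_simps power2_eq_square)
  with field_vector_diff_chain_at[OF inner outer] show ?thesis by (simp add: o_def)
qed

lemma j0_ratio_closed_form:
  fixes c :: complex assumes c: "c \<noteq> 0"
  shows "j0 c / vector_derivative (\<lambda>r::real. j0 (c * of_real r)) (at 1)
       = sin c / (c * cos c - sin c)"
  using vector_derivative_at[OF j0_radial_derivative[OF c]] c
  by (cases "c * cos c - sin c = 0") (simp_all add: j0_def field_simps)

text \<open>Real core of the Bessel estimate: since |sinh s| < cosh s,
  |s cosh s - sinh s| \<ge> 2 cosh s - |sinh s| > |sinh s| for |s| \<ge> 2.\<close>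
lemma abs_sinh_lt_s_cosh_minus_sinh:
  fixes s :: real assumes s: "\<bar>s\<bar> \<ge> 2"
  shows "\<bar>sinh s\<bar> < \<bar>s * cosh s - sinh s\<bar>"
proof -
  have sinh_lt: "\<bar>sinh s\<bar> < cosh s"
    using sinh_less_cosh_real[of s] sinh_less_cosh_real[of "-s"] by auto
  have "2 * cosh s \<le> \<bar>s\<bar> * cosh s"
    using s by (intro mult_right_mono) (auto simp: less_imp_le)
  also have "\<dots> = \<bar>s * cosh s\<bar>" by (simp add: abs_mult)
  also have "\<dots> \<le> \<bar>s * cosh s - sinh s\<bar> + \<bar>sinh s\<bar>" by linarith
  finally show ?thesis using sinh_lt by linarith
qed

lemma j0_ratio_bound_imaginary:
  fixes s :: real assumes s: "\<bar>s\<bar> \<ge> 2"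
  defines "c \<equiv> \<i> * complex_of_real s"
  shows "vector_derivative (\<lambda>r::real. j0 (c * of_real r)) (at 1) \<noteq> 0"
    and "cmod (j0 c / vector_derivative (\<lambda>r::real. j0 (c * of_real r)) (at 1)) \<le> 1"
proof -
  have c0: "c \<noteq> 0" using s by (auto simp: c_def)
  have sinh_of_real: "sinh (complex_of_real x) = of_real (sinh x)" for x
    by (simp add: sinh_field_def exp_of_real flip: of_real_minus)
  have cosh_of_real: "cosh (complex_of_real x) = of_real (cosh x)" for x
    by (simp add: cosh_field_def exp_of_real flip: of_real_minus)
  have sin_c: "sin c = \<i> * of_real (sinh s)"
    using sinh_of_real[of s] by (simp add: c_def sin_conv_sinh)
  have cos_c: "cos c = of_real (cosh s)"
    using cosh_of_real[of s] by (simp add: c_def cos_conv_cosh)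
  have den: "c * cos c - sin c = \<i> * of_real (s * cosh s - sinh s)"
    unfolding sin_c cos_c by (simp add: c_def algebra_simps)
  have "cmod (sin c) = \<bar>sinh s\<bar>" unfolding sin_c norm_mult norm_ii norm_of_real by simp
  moreover have "cmod (c * cos c - sin c) = \<bar>s * cosh s - sinh s\<bar>"
    unfolding den norm_mult norm_ii norm_of_real by simp
  ultimately have lt: "cmod (sin c) < cmod (c * cos c - sin c)"
    using abs_sinh_lt_s_cosh_minus_sinh[OF s] by simp
  hence den0: "c * cos c - sin c \<noteq> 0" by auto
  show "vector_derivative (\<lambda>r::real. j0 (c * of_real r)) (at 1) \<noteq> 0"
    using vector_derivative_at[OF j0_radial_derivative[OF c0]] c0 den0 by simp
  show "cmod (j0 c / vector_derivative (\<lambda>r::real. j0 (c * of_real r)) (at 1)) \<le> 1"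
    using lt den0 by (simp add: j0_ratio_closed_form[OF c0] norm_divide divide_le_eq_1)
qed

section \<open>Specialisation to k = i t\<close>

lemma imaginary_axis_coefficient:
  fixes t e g :: real
  assumes t: "t \<noteq> 0"
  shows "- ((\<i> * of_real t)\<^sup>2 * (complex_of_real e + \<i> * complex_of_real g / (\<i> * of_real t)))
       = of_real (t\<^sup>2 * e + t * g)"
  using t by (simp add: field_simps power2_eq_square)

text \<open>Sign of that coefficient: t gam1 can only be negative for t < 0, where it is
  dominated by t^2 eps1 provided gam1/eps1 \<le> |t|.\<close>
lemma imaginary_axis_coefficient_nonneg:
  fixes t e g :: real
  assumes e: "e > 0" and g: "g > 0" and dom: "g / e \<le> \<bar>t\<bar>"
  shows "t\<^sup>2 * e + t * g \<ge> 0"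
proof (cases "t \<ge> 0")
  case True thus ?thesis using e g by simp
next
  case False
  have "g \<le> \<bar>t\<bar> * e" using dom e by (simp add: pos_divide_le_eq)
  hence "t * g \<ge> t * (\<bar>t\<bar> * e)" using False by (intro mult_left_mono_neg) auto
  moreover have "t * (\<bar>t\<bar> * e) = - (t\<^sup>2 * e)" using False by (simp add: power2_eq_square)
  ultimately show ?thesis by linarith
qed

lemma imaginary_axis_scaled_wavenumber:
  fixes eps0 gam0 t :: real
  assumes t: "t \<noteq> 0" and nonneg: "eps0 + gam0 / t \<ge> 0"
  shows "\<i> * of_real t * ntilde0 eps0 gam0 (\<i> * of_real t)
       = \<i> * of_real (t * sqrt (eps0 + gam0 / t))"
proof -
  have "complex_of_real eps0 + \<i> * complex_of_real gam0 / (\<i> * of_real t) = of_real (eps0 + gam0 / t)"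
    using t by simp
  with nonneg show ?thesis by (simp add: ntilde0_def csqrt_of_real_nonneg)
qed

text \<open>The real number s = t sqrt(eps0 + gam0/t) satisfies |s| \<ge> 2 once
  |t| \<ge> 2 gam0/eps0 (so eps0 + gam0/t \<ge> eps0/2) and t^2 \<ge> 8/eps0.\<close>
lemma scaled_wavenumber_large:
  fixes eps0 gam0 t :: real
  assumes eps0: "eps0 > 0" and gam0: "gam0 > 0"
    and t_gam: "2 * gam0 / eps0 \<le> \<bar>t\<bar>" and t_sq: "8 / eps0 \<le> t\<^sup>2"
  shows "eps0 + gam0 / t \<ge> 0" and "\<bar>t * sqrt (eps0 + gam0 / t)\<bar> \<ge> 2"
proof -
  have t0: "\<bar>t\<bar> > 0" using t_sq eps0 by (cases "t = 0") simp_all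
  have "gam0 / \<bar>t\<bar> \<le> eps0 / 2"
    using t_gam eps0 t0 by (simp add: pos_divide_le_eq divide_le_eq field_simps)
  moreover have "\<bar>gam0 / t\<bar> = gam0 / \<bar>t\<bar>" using gam0 by simp
  ultimately have half: "eps0 + gam0 / t \<ge> eps0 / 2" by linarith
  thus nonneg: "eps0 + gam0 / t \<ge> 0" using eps0 by linarith
  have "4 \<le> t\<^sup>2 * (eps0 / 2)" using t_sq eps0 by (simp add: divide_le_eq)
  also have "\<dots> \<le> t\<^sup>2 * (eps0 + gam0 / t)" using half by (intro mult_left_mono) auto
  also have "\<dots> = (t * sqrt (eps0 + gam0 / t))\<^sup>2" using nonneg by (simp add: power_mult_distrib)
  finally show "\<bar>t * sqrt (eps0 + gam0 / t)\<bar> \<ge> 2"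
    using abs_le_square_iff[of "2::real"] by simp
qed

lemma dirichlet_neumann_ratio_imaginary:
  fixes t B :: real and eps1 gam1 :: "real \<Rightarrow> real" and u v :: "real \<Rightarrow> complex"
  assumes t0: "t \<noteq> 0" and t_B: "B \<le> \<bar>t\<bar>"
    and B: "\<forall>r\<in>{0..1}. gam1 r / eps1 r \<le> B"
    and eps1_pos: "\<forall>r\<in>{0..1}. eps1 r > 0" and gam1_pos: "\<forall>r\<in>{0..1}. gam1 r > 0"
    and du: "\<forall>r\<in>{0..1}. (u has_vector_derivative v r) (at r within {0..1})"
    and dv: "\<forall>r\<in>{0..1}. (v has_vector_derivative
               (- ((\<i> * of_real t)\<^sup>2 * (complex_of_real (eps1 r)
                   + \<i> * complex_of_real (gam1 r) / (\<i> * of_real t))) * u r))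
               (at r within {0..1})"
    and u0: "u 0 = 0" and v0: "v 0 = 1"
  shows "v 1 \<noteq> 0" and "cmod (u 1 / v 1) \<le> 1"
proof -
  have q_nonneg: "\<forall>r\<in>{0..1}. 0 \<le> t\<^sup>2 * eps1 r + t * gam1 r"
    using imaginary_axis_coefficient_nonneg eps1_pos gam1_pos B t_B by (meson order_trans)
  have "\<forall>r\<in>{0..1}. (v has_vector_derivative
      (of_real (t\<^sup>2 * eps1 r + t * gam1 r) * u r)) (at r within {0..1})"
    using dv by (simp only: imaginary_axis_coefficient[OF t0])
  from dirichlet_le_neumann[OF q_nonneg du this u0 v0]
  show "v 1 \<noteq> 0" and "cmod (u 1 / v 1) \<le> 1"
    by (simp_all add: norm_divide divide_le_eq_1)
qed

lemma j0_ratio_imaginary: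
  fixes eps0 gam0 t :: real
  assumes eps0: "eps0 > 0" and gam0: "gam0 > 0"
    and t_large: "2 * gam0 / eps0 + 8 / eps0 + 1 \<le> \<bar>t\<bar>"
  defines "c \<equiv> \<i> * of_real t * ntilde0 eps0 gam0 (\<i> * of_real t)"
  shows "vector_derivative (\<lambda>r::real. j0 (c * of_real r)) (at 1) \<noteq> 0"
    and "cmod (j0 c / vector_derivative (\<lambda>r::real. j0 (c * of_real r)) (at 1)) \<le> 1"
proof -
  have quot_nonneg: "0 \<le> 2 * gam0 / eps0" "0 \<le> 8 / eps0" using eps0 gam0 by auto
  hence t_gam: "2 * gam0 / eps0 \<le> \<bar>t\<bar>" using t_large by linarith
  have "8 / eps0 * 1 \<le> \<bar>t\<bar> * \<bar>t\<bar>"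
    using t_large quot_nonneg by (intro mult_mono) linarith+
  hence t_sq: "8 / eps0 \<le> t\<^sup>2" by (simp add: power2_eq_square)
  define s where "s = t * sqrt (eps0 + gam0 / t)"
  note s_large = scaled_wavenumber_large[OF eps0 gam0 t_gam t_sq, folded s_def]
  have "t \<noteq> 0" using t_sq eps0 by (cases "t = 0") simp_all
  hence "c = \<i> * of_real s"
    using s_large by (simp add: c_def s_def imaginary_axis_scaled_wavenumber)
  with j0_ratio_bound_imaginary[OF s_large(2)]
  show "vector_derivative (\<lambda>r::real. j0 (c * of_real r)) (at 1) \<noteq> 0"
    and "cmod (j0 c / vector_derivative (\<lambda>r::real. j0 (c * of_real r)) (at 1)) \<le> 1"
    by simp_all
qed

theorem lemma2p1:
  fixes eps0 gam0 :: real
    and eps1 gam1 eps1' gam1' eps1'' gam1'' :: "real \<Rightarrow> real"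
    and y yp :: "complex \<Rightarrow> real \<Rightarrow> complex"
  assumes eps0_pos: "eps0 > 0" and gam0_pos: "gam0 > 0"
    and eps1_pos: "\<forall>r\<in>{0..1}. eps1 r > 0"
    and gam1_pos: "\<forall>r\<in>{0..1}. gam1 r > 0"
    and eps1_d1: "\<forall>r\<in>{0..1}. (eps1 has_real_derivative eps1' r) (at r within {0..1})"
    and eps1_d2: "\<forall>r\<in>{0..1}. (eps1' has_real_derivative eps1'' r) (at r within {0..1})"
    and gam1_d1: "\<forall>r\<in>{0..1}. (gam1 has_real_derivative gam1' r) (at r within {0..1})"
    and gam1_d2: "\<forall>r\<in>{0..1}. (gam1' has_real_derivative gam1'' r) (at r within {0..1})"
    and y_d1: "\<forall>k. k \<noteq> 0 \<longrightarrow> (\<forall>r\<in>{0..1}.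
                 (y k has_vector_derivative yp k r) (at r within {0..1}))"
    and y_ode: "\<forall>k. k \<noteq> 0 \<longrightarrow> (\<forall>r\<in>{0..1}.
                 (yp k has_vector_derivative
                    (- (k\<^sup>2 * (complex_of_real (eps1 r) + \<i> * complex_of_real (gam1 r) / k)) * y k r))
                 (at r within {0..1}))"
    and y_init: "\<forall>k. k \<noteq> 0 \<longrightarrow> y k 0 = 0 \<and> yp k 0 = 1"
  shows "\<exists>M k0. M > 0 \<and> k0 > 0 \<and>
    (\<forall>t::real. \<bar>t\<bar> > k0 \<longrightarrow>
      (let k = \<i> * complex_of_real t;
           n0 = ntilde0 eps0 gam0 k;
           dj = vector_derivative (\<lambda>r::real. j0 (k * n0 * complex_of_real r)) (at 1)
       in yp k 1 \<noteq> 0 \<and> cmod (y k 1 / yp k 1) < M \<and>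
          dj \<noteq> 0 \<and> cmod (j0 (k * n0) / dj) < M))"
proof -
  have "continuous_on {0..1} (\<lambda>r. gam1 r / eps1 r)"
    using eps1_d1 gam1_d1 eps1_pos
    by (intro continuous_intros)
       (auto simp: continuous_on_eq_continuous_within intro: DERIV_continuous)
  then obtain B where B: "\<forall>r\<in>{0..1}. gam1 r / eps1 r \<le> B"
    using continuous_attains_sup[of "{0..1::real}"] by fastforce
  define k0 where "k0 = \<bar>B\<bar> + 2 * gam0 / eps0 + 8 / eps0 + 1"
  have quot_nonneg: "0 \<le> 2 * gam0 / eps0" "0 \<le> 8 / eps0" using eps0_pos gam0_pos by auto
  have k0_pos: "k0 > 0" unfolding k0_def using quot_nonneg by linarith
  have bound: "let k = \<i> * complex_of_real t;
           n0 = ntilde0 eps0 gam0 k;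
           dj = vector_derivative (\<lambda>r::real. j0 (k * n0 * complex_of_real r)) (at 1)
       in yp k 1 \<noteq> 0 \<and> cmod (y k 1 / yp k 1) < 2 \<and>
          dj \<noteq> 0 \<and> cmod (j0 (k * n0) / dj) < 2"
    if "\<bar>t\<bar> > k0" for t
  proof -
    have t_B: "B \<le> \<bar>t\<bar>" and t_large: "2 * gam0 / eps0 + 8 / eps0 + 1 \<le> \<bar>t\<bar>"
      and "0 < \<bar>t\<bar>"
      using that quot_nonneg abs_ge_self[of B] abs_ge_zero[of B] unfolding k0_def by linarith+
    hence t0: "t \<noteq> 0" and k_nonzero: "\<i> * complex_of_real t \<noteq> 0" by simp_all
    have init: "y (\<i> * of_real t) 0 = 0" "yp (\<i> * of_real t) 0 = 1"
      using y_init k_nonzero by simp_all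
    note Y = dirichlet_neumann_ratio_imaginary[OF t0 t_B B eps1_pos gam1_pos
        y_d1[THEN spec, THEN mp, OF k_nonzero] y_ode[THEN spec, THEN mp, OF k_nonzero] init]
    note J = j0_ratio_imaginary[OF eps0_pos gam0_pos t_large]
    show ?thesis
      unfolding Let_def using Y J by (intro conjI) (assumption | linarith)+
  qed
  show ?thesis
    by (rule exI[of _ "2::real"], rule exI[of _ k0], intro conjI allI impI)
       (simp, fact k0_pos, erule bound)
qed

end
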